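(* For every positive integer $n$, \[ \sum_{k=1}^{n}(4k+1)\frac{(\tfrac{1}{2})_k^3}{k!^3}\frac{(-n)_k}{(\tfrac{3}{2}+n)_k}\sum_{i=1}^{2k}\frac{(-1)^i}{i^2} =\frac{(\tfrac{1}{2})_n(\tfrac{3}{2})_n}{n!^2}\sum_{j=1}^{n}\frac{1}{4j^2}. \]
   Context: For a complex number $x$ and a nonnegative integer $n$, $(x)_n=x(x+1)\cdots(x+n-1)$ denotes the shifted factorial (Pochhammer symbol), with $(x)_0=1$. *)

theory Defs
  imports Complex_Main
begin

end

theory Submission
  imports Defs
begin

text \<open>
  Divided by the prefactor (1/2)_n (3/2)_n / n!^2 of the right-hand side and without the
  inner sum, the summand becomes F(n,k) = dougall_summand n k, the summand of Dougall's
  terminating well-poised 5F4-sum. Together with an explicit rational multiple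
  G(n,k) = dougall_cert n k of F(n+1,k) it forms a WZ pair,
  F(n+1,k) - F(n,k) = G(n,k+1) - G(n,k), so that sum_k F(n,k) = 1 for every n.
  For U(n) = sum_k F(n,k) H(k), with H(k) = alt_harmonic2 k the alternating sum of
  (-1)^i/i^2 over i \<le> 2k, the WZ relation and summation by parts give
  U(n+1) - U(n) = - sum_k G(n,k+1) (H(k+1) - H(k)). Each term G(n,k+1) (H(k+1) - H(k))
  equals -F(n+1,k) / (4(n+1)^2) up to a telescoping difference, so Dougall's sum yields
  U(n+1) - U(n) = 1 / (4(n+1)^2).
\<close>

lemma pochhammer_shift_base:
  fixes a :: "'a::comm_semiring_1"
  shows "a * pochhammer (a + 1) k = (a + of_nat k) * pochhammer a k"
  by (metis pochhammer_rec pochhammer_rec')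

lemma sum_lessThan_by_parts:
  fixes f g :: "nat \<Rightarrow> 'a::comm_ring"
  shows "(\<Sum>k<m. (f (Suc k) - f k) * g k)
    = f m * g m - f 0 * g 0 - (\<Sum>k<m. f (Suc k) * (g (Suc k) - g k))"
  by (induction m) (simp_all add: algebra_simps)

definition half_cube :: "nat \<Rightarrow> real" where
  "half_cube k = pochhammer (1/2) k ^ 3 / fact k ^ 3"

definition rhs_factor :: "nat \<Rightarrow> real" where
  "rhs_factor n = pochhammer (1/2) n * pochhammer (3/2) n / fact n ^ 2"

definition weight :: "nat \<Rightarrow> nat \<Rightarrow> real" where
  "weight n k = pochhammer (- real n) k / pochhammer (3/2 + real n) k / rhs_factor n"

definition dougall_summand :: "nat \<Rightarrow> nat \<Rightarrow> real" where
  "dougall_summand n k = (4 * real k + 1) * half_cube k * weight n k"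

definition dougall_cert :: "nat \<Rightarrow> nat \<Rightarrow> real" where
  "dougall_cert n k =
     -2 * real k ^ 3 * (real k + real n + 3/2) / (real n + 1) ^ 3 * half_cube k * weight (Suc n) k"

definition alt_harmonic2 :: "nat \<Rightarrow> real" where
  "alt_harmonic2 k = (\<Sum>i=1..2*k. (-1) ^ i / real i ^ 2)"

text \<open>The factor \<open>j\<close> makes the value at \<open>j = 0\<close>, where \<open>j - 1\<close> truncates, equal to \<open>0\<close>.\<close>
definition harmonic_cert :: "nat \<Rightarrow> nat \<Rightarrow> real" where
  "harmonic_cert n j = real j * (real n - real j + 1) * half_cube j * weight n (j - 1)"

lemma half_cube_0: "half_cube 0 = 1"
  by (simp add: half_cube_def)

lemma half_cube_Suc: "half_cube (Suc k) = half_cube k * ((real k + 1/2) ^ 3 / (real k + 1) ^ 3)"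
proof -
  have "half_cube (Suc k) = (pochhammer (1/2) k * (real k + 1/2)) ^ 3 / (fact k * (real k + 1)) ^ 3"
    unfolding half_cube_def by (simp add: pochhammer_Suc algebra_simps)
  then show ?thesis
    unfolding half_cube_def power_mult_distrib by simp
qed

lemma rhs_factor_pos: "rhs_factor n > 0"
  unfolding rhs_factor_def by (intro divide_pos_pos mult_pos_pos pochhammer_pos) auto

lemma rhs_factor_Suc:
  "rhs_factor (Suc n) = rhs_factor n * (real n + 1/2) * (real n + 3/2) / (real n + 1) ^ 2"
  unfolding rhs_factor_def by (simp add: pochhammer_Suc field_simps power2_eq_square)

lemma weight_0: "weight n 0 = 1 / rhs_factor n"
  by (simp add: weight_def)

lemma weight_Suc: "weight n (Suc k) = weight n k * ((real k - real n) / (real k + real n + 3/2))"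
proof -
  have "pochhammer (3/2 + real n) k > 0"
    by (intro pochhammer_pos) auto
  then show ?thesis
    unfolding weight_def using rhs_factor_pos[of n] by (simp add: pochhammer_Suc field_simps)
qed

lemma weight_Suc_self: "weight n (Suc n) = 0"
  by (simp add: weight_Suc)

lemma weight_Suc_param:
  "weight n k = weight (Suc n) k *
     ((real n + 1 - real k) * (real n + 3/2 + real k) * (real n + 1/2) / (real n + 1) ^ 3)"
proof -
  define P Q A B where "P = pochhammer (- real n) k" and "Q = pochhammer (- real (Suc n)) k"
    and "A = pochhammer (3/2 + real n) k" and "B = pochhammer (3/2 + real (Suc n)) k"
  have absorb: "(real n + 1 - real k) * Q = (real n + 1) * P"
    using pochhammer_absorb_comp[of "real n + 1" k] unfolding P_def Q_def by (simp add: algebra_simps)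
  have shift: "(3/2 + real n) * B = (3/2 + real n + real k) * A"
    using pochhammer_shift_base[of "3/2 + real n" k] unfolding A_def B_def by (simp add: add_ac)
  have pos: "A > 0" "B > 0" "rhs_factor n > 0"
    unfolding A_def B_def by (auto intro!: pochhammer_pos rhs_factor_pos)
  have "weight (Suc n) k *
      ((real n + 1 - real k) * (real n + 3/2 + real k) * (real n + 1/2) / (real n + 1) ^ 3)
    = ((real n + 1 - real k) * Q) * (3/2 + real n + real k)
      / (((3/2 + real n) * B) * rhs_factor n * (real n + 1))"
    unfolding weight_def rhs_factor_Suc P_def Q_def A_def B_def [symmetric] using pos
    by (simp add: divide_simps) (simp add: algebra_simps power2_eq_square power3_eq_cube)
  also have "\<dots> = weight n k"
    unfolding absorb shift weight_def P_def [symmetric] A_def [symmetric]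
    using pos by (simp add: divide_simps add_pos_nonneg)
  finally show ?thesis ..
qed

lemma dougall_wz_rational_identity:
  fixes k n :: real
  assumes "k \<ge> 0" "n \<ge> 0"
  shows "(4*k + 1) - (4*k + 1) * ((n + 1 - k) * (n + 3/2 + k) * (n + 1/2) / (n + 1) ^ 3)
    = -2 * (k + 1) ^ 3 * (k + n + 5/2) / (n + 1) ^ 3 * ((k + 1/2) ^ 3 / (k + 1) ^ 3)
        * ((k - (n + 1)) / (k + (n + 1) + 3/2))
      - (-2 * k ^ 3 * (k + n + 3/2) / (n + 1) ^ 3)"
proof -
  have "k + (n + 1) + 3/2 \<noteq> 0" "n + 1 \<noteq> 0" "k + 1 \<noteq> 0" "k + n + 5/2 = k + (n + 1) + 3/2"
    using assms by auto
  then show ?thesis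
    by (simp add: divide_simps) algebra
qed

lemma dougall_wz_pair:
  "dougall_summand (Suc n) k - dougall_summand n k = dougall_cert n (Suc k) - dougall_cert n k"
proof -
  define T where "T = half_cube k * weight (Suc n) k"
  have "dougall_summand (Suc n) k - dougall_summand n k
    = T * ((4 * real k + 1) - (4 * real k + 1) *
        ((real n + 1 - real k) * (real n + 3/2 + real k) * (real n + 1/2) / (real n + 1) ^ 3))"
    unfolding dougall_summand_def T_def by (subst weight_Suc_param[of n k]) (simp add: algebra_simps)
  also have "\<dots> = T * (-2 * (real k + 1) ^ 3 * (real k + real n + 5/2) / (real n + 1) ^ 3
        * ((real k + 1/2) ^ 3 / (real k + 1) ^ 3) * ((real k - (real n + 1)) / (real k + (real n + 1) + 3/2))
      - (-2 * real k ^ 3 * (real k + real n + 3/2) / (real n + 1) ^ 3))"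
    by (subst dougall_wz_rational_identity) auto
  also have "\<dots> = dougall_cert n (Suc k) - dougall_cert n k"
    unfolding dougall_cert_def T_def half_cube_Suc weight_Suc[of "Suc n"] by (simp add: algebra_simps)
  finally show ?thesis .
qed

lemma dougall_summand_Suc_self: "dougall_summand n (Suc n) = 0"
  by (simp add: dougall_summand_def weight_Suc_self)

lemma dougall_cert_Suc_Suc_self: "dougall_cert n (Suc (Suc n)) = 0"
  by (simp add: dougall_cert_def weight_Suc[of "Suc n" "Suc n"])

lemma sum_dougall_summand: "(\<Sum>k<Suc n. dougall_summand n k) = 1"
proof (induction n)
  case 0
  show ?case by (simp add: dougall_summand_def half_cube_0 weight_0 rhs_factor_def)
next
  case (Suc n)
  have "(\<Sum>k<Suc (Suc n). dougall_summand (Suc n) k)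
      = (\<Sum>k<Suc (Suc n). dougall_summand n k + (dougall_cert n (Suc k) - dougall_cert n k))"
    using dougall_wz_pair by (intro sum.cong) (auto simp: algebra_simps)
  also have "\<dots> = (\<Sum>k<Suc n. dougall_summand n k) - dougall_cert n 0"
    by (simp add: sum.distrib sum_lessThan_telescope dougall_summand_Suc_self dougall_cert_Suc_Suc_self)
  also have "\<dots> = 1"
    using Suc.IH by (simp add: dougall_cert_def)
  finally show ?case .
qed

lemma alt_harmonic2_0: "alt_harmonic2 0 = 0"
  by (simp add: alt_harmonic2_def)

lemma alt_harmonic2_Suc:
  "alt_harmonic2 (Suc k) - alt_harmonic2 k = 1 / (2 * real k + 2) ^ 2 - 1 / (2 * real k + 1) ^ 2"
proof -
  have "2 * Suc k = Suc (Suc (2 * k))" by simp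
  then have "alt_harmonic2 (Suc k) = alt_harmonic2 k + (-1) ^ Suc (2 * k) / real (Suc (2 * k)) ^ 2
      + (-1) ^ Suc (Suc (2 * k)) / real (Suc (Suc (2 * k))) ^ 2"
    unfolding alt_harmonic2_def by (simp add: sum.cl_ivl_Suc)
  then show ?thesis by (simp add: algebra_simps)
qed

lemma dougall_cert_alt_harmonic2_diff:
  "dougall_cert n (Suc j) * (alt_harmonic2 (Suc j) - alt_harmonic2 j)
    = - dougall_summand (Suc n) j / (4 * (real n + 1) ^ 2)
      + (harmonic_cert (Suc n) (Suc j) - harmonic_cert (Suc n) j) / (2 * (real n + 1) ^ 3)"
proof (cases j)
  case 0
  have "real n + 5/2 \<noteq> 0" "real n + 1 \<noteq> 0" by auto
  then show ?thesis
    unfolding 0 alt_harmonic2_Suc dougall_cert_def dougall_summand_def harmonic_cert_def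
      half_cube_Suc weight_Suc half_cube_0
    by (simp add: divide_simps) algebra
next
  case (Suc i)
  have "real n + 5/2 + real i \<noteq> 0" "real n + 7/2 + real i \<noteq> 0" "real n + 1 \<noteq> 0"
    "2 * real i + 3 \<noteq> 0" "real i + 1 \<noteq> 0" "real i + 2 \<noteq> 0" by auto
  then show ?thesis
    unfolding Suc alt_harmonic2_Suc dougall_cert_def dougall_summand_def harmonic_cert_def
    by (simp add: divide_simps weight_Suc half_cube_Suc) algebra
qed

lemma sum_dougall_summand_alt_harmonic2:
  "(\<Sum>k<Suc n. dougall_summand n k * alt_harmonic2 k) = (\<Sum>j=1..n. 1 / (4 * real j ^ 2))"
proof (induction n)
  case 0
  show ?case by (simp add: alt_harmonic2_0)
next
  case (Suc n)
  let ?F = "dougall_summand" and ?G = "dougall_cert n" and ?H = "alt_harmonic2"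
    and ?E = "harmonic_cert (Suc n)" and ?m = "Suc (Suc n)"
  have "(\<Sum>k<?m. ?F (Suc n) k * ?H k)
      = (\<Sum>k<?m. ?F n k * ?H k) + (\<Sum>k<?m. (?G (Suc k) - ?G k) * ?H k)"
    by (simp add: dougall_wz_pair [symmetric] sum.distrib [symmetric] algebra_simps)
  also have "(\<Sum>k<?m. ?F n k * ?H k) = (\<Sum>j=1..n. 1 / (4 * real j ^ 2))"
    using Suc.IH by (simp add: dougall_summand_Suc_self)
  also have "(\<Sum>k<?m. (?G (Suc k) - ?G k) * ?H k) = - (\<Sum>k<?m. ?G (Suc k) * (?H (Suc k) - ?H k))"
    unfolding sum_lessThan_by_parts by (simp add: dougall_cert_Suc_Suc_self alt_harmonic2_0)
  also have "(\<Sum>k<?m. ?G (Suc k) * (?H (Suc k) - ?H k))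
      = - (\<Sum>k<?m. ?F (Suc n) k) / (4 * (real n + 1) ^ 2) + (?E ?m - ?E 0) / (2 * (real n + 1) ^ 3)"
    unfolding dougall_cert_alt_harmonic2_diff sum.distrib sum_divide_distrib [symmetric] sum_negf
      sum_lessThan_telescope ..
  also have "\<dots> = - 1 / (4 * (real n + 1) ^ 2)"
    using sum_dougall_summand[of "Suc n"] by (simp add: harmonic_cert_def)
  finally show ?case by (simp add: add_ac)
qed

theorem mainTheorem7:
  fixes n :: nat
  assumes "n \<ge> 1"
  shows "(\<Sum>k=1..n. (4 * real k + 1) * (pochhammer (1/2) k) ^ 3 / (fact k) ^ 3
            * pochhammer (- real n) k / pochhammer (3/2 + real n) k
            * (\<Sum>i=1..2*k. (-1) ^ i / (real i) ^ 2))
         = pochhammer (1/2) n * pochhammer (3/2) n / (fact n) ^ 2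
            * (\<Sum>j=1..n. 1 / (4 * (real j) ^ 2))"
proof -
  have summand: "(4 * real k + 1) * (pochhammer (1/2) k) ^ 3 / (fact k) ^ 3
      * pochhammer (- real n) k / pochhammer (3/2 + real n) k * (\<Sum>i=1..2*k. (-1) ^ i / (real i) ^ 2)
    = rhs_factor n * (dougall_summand n k * alt_harmonic2 k)" for k
    using rhs_factor_pos[of n] pochhammer_pos[of "3/2 + real n" k]
    unfolding dougall_summand_def half_cube_def weight_def alt_harmonic2_def by (simp add: field_simps)
  have "{..<Suc n} = insert 0 {1..n}" by auto
  then have "(\<Sum>k=1..n. dougall_summand n k * alt_harmonic2 k)
      = (\<Sum>k<Suc n. dougall_summand n k * alt_harmonic2 k)"
    by (simp add: alt_harmonic2_0)
  then show ?thesis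
    unfolding summand sum_distrib_left [symmetric] sum_dougall_summand_alt_harmonic2 rhs_factor_def
    by simp
qed

end
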